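(* Let $q\geq 19$ and $n\geq 2^q/\binom{q}{\leq 2}$ be integers, and let $\Delta$ be defined (as in the context) for the $q$-round pathological liar game with $2$ lies and initial state $(n,0,0)$. Then $$\Delta=-A\binom{q-1}{2}-B\binom{q-2}{1},$$ where $A=n\bmod 2$ and $B=0$ if $n\equiv 0\pmod 4$, $B=2\cdot(q\bmod 2)$ if $n\equiv1\pmod 4$, $B=(1-q^3)\bmod 4$ if $n\equiv 2\pmod 4$, and $B=(1+q^3)\bmod 4$ if $n\equiv 3\pmod 4$. Furthermore, there is a choice of questions $\vec{a},\vec{b}^{Y},\vec{b}^{N}$ attaining the maximum defining $\Delta$ such that every possible state after the first two rounds has last coordinate (number of elements with $2$ lies) at least $(q-2)^2+\binom{q-2}{\leq 2}$.
   Context: Liar game with $2$ lies: a state is $\vec{x}=(x_0,x_1,x_2)$ of nonnegative integers; a legal question is $\vec{a}=(a_0,a_1,a_2)$ with integers $0\leq a_i\leq x_i$; the two possible next states are $Y(\vec{x},\vec{a})=(a_0,\,a_1+x_0-a_0,\,a_2+x_1-a_1)$ and $N(\vec{x},\vec{a})=(x_0-a_0,\,x_1-a_1+a_0,\,x_2-a_2+a_1)$. Weight: $wt_j(\vec{x})=x_0\binom{j}{\leq 2}+x_1\binom{j}{\leq 1}+x_2$, with $\binom{j}{\leq m}=\sum_{i=0}^m\binom{j}{i}$. Weight imbalance: $\Delta_j(\vec{x},\vec{a})=wt_j(Y(\vec{x},\vec{a}))-wt_j(N(\vec{x},\vec{a}))$. For the initial state $(n,0,0)$, Paul's first question is $\vec{a}$,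 and his second question is $\vec{b}^{Y}$ (legal for $Y((n,0,0),\vec{a})$) if Carole answered Y and $\vec{b}^{N}$ (legal for $N((n,0,0),\vec{a})$) if she answered N. Set $\Delta_{q-1}=\Delta_{q-1}((n,0,0),\vec{a})$, $\Delta^{Y}_{q-2}=\Delta_{q-2}(Y((n,0,0),\vec{a}),\vec{b}^{Y})$, $\Delta^{N}_{q-2}=\Delta_{q-2}(N((n,0,0),\vec{a}),\vec{b}^{N})$. Then $\Delta$ is defined as the maximum, over all such legal $\vec{a},\vec{b}^{Y},\vec{b}^{N}$ for which $\Delta_{q-1},\Delta^{Y}_{q-2},\Delta^{N}_{q-2}$ are all nonnegative, of $$\min\{\Delta_{q-1}+2\Delta^{Y}_{q-2},\ \Delta_{q-1}-2\Delta^{Y}_{q-2},\ -\Delta_{q-1}+2\Delta^{N}_{q-2},\ -\Delta_{q-1}-2\Delta^{N}_{q-2}\}.$$ "$m\bmod 2$", "$m\bmod 4$" denote least nonnegative residues. *)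

theory Defs
  imports Complex_Main
begin

definition bsum :: "nat \<Rightarrow> nat \<Rightarrow> nat" where
  "bsum j m = (\<Sum>i\<le>m. j choose i)"

type_synonym lstate = "nat \<times> nat \<times> nat"

fun legal :: "lstate \<Rightarrow> lstate \<Rightarrow> bool" where
  "legal (x0, x1, x2) (a0, a1, a2) \<longleftrightarrow> a0 \<le> x0 \<and> a1 \<le> x1 \<and> a2 \<le> x2"

fun Yst :: "lstate \<Rightarrow> lstate \<Rightarrow> lstate" where
  "Yst (x0, x1, x2) (a0, a1, a2) = (a0, a1 + x0 - a0, a2 + x1 - a1)"

fun Nst :: "lstate \<Rightarrow> lstate \<Rightarrow> lstate" where
  "Nst (x0, x1, x2) (a0, a1, a2) = (x0 - a0, x1 - a1 + a0, x2 - a2 + a1)"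

fun wt :: "nat \<Rightarrow> lstate \<Rightarrow> int" where
  "wt j (x0, x1, x2) = int x0 * int (bsum j 2) + int x1 * int (bsum j 1) + int x2"

definition imb :: "nat \<Rightarrow> lstate \<Rightarrow> lstate \<Rightarrow> int" where
  "imb j x a = wt j (Yst x a) - wt j (Nst x a)"

definition admissible :: "nat \<Rightarrow> nat \<Rightarrow> lstate \<Rightarrow> lstate \<Rightarrow> lstate \<Rightarrow> bool" where
  "admissible q n a bY bN \<longleftrightarrow>
     legal (n, 0, 0) a \<and> legal (Yst (n, 0, 0) a) bY \<and> legal (Nst (n, 0, 0) a) bN \<and>
     imb (q - 1) (n, 0, 0) a \<ge> 0 \<and>
     imb (q - 2) (Yst (n, 0, 0) a) bY \<ge> 0 \<and>
     imb (q - 2) (Nst (n, 0, 0) a) bN \<ge> 0"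

definition qval :: "nat \<Rightarrow> nat \<Rightarrow> lstate \<Rightarrow> lstate \<Rightarrow> lstate \<Rightarrow> int" where
  "qval q n a bY bN =
    (let d = imb (q - 1) (n, 0, 0) a;
         dY = imb (q - 2) (Yst (n, 0, 0) a) bY;
         dN = imb (q - 2) (Nst (n, 0, 0) a) bN
     in min (min (d + 2 * dY) (d - 2 * dY)) (min (- d + 2 * dN) (- d - 2 * dN)))"

definition Delta :: "nat \<Rightarrow> nat \<Rightarrow> int" where
  "Delta q n = Max {qval q n a bY bN | a bY bN. admissible q n a bY bN}"

end

(*
  Legality forces the first question to be (a0, 0, 0) and the second ones to be (b0, b1, 0)
  on states (y0, y1, 0); the imbalance of such a second question with q - 2 = m rounds left is
  (2 b0 - y0) C(m, 2) + (2 b1 - y1) m.  These values lie in the residue class of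
  -(y0 C(m, 2) + y1 m) modulo 2 gcd(C(m, 2), m), so every nonnegative one is at least the least
  nonnegative element min_imb m y0 y1 of that class, which depends only on parities; for large
  states it is attained with b1 far from both 0 and y1.  The value of a strategy is at most
  -d - 2 dN, where d = (2 a0 - n) C(q - 1, 2) is the first imbalance and dN >= 0 the second
  one after the answer N, so the balanced first
  question a0 = n - n div 2 is optimal and
  Delta = -(n mod 2) C(q - 1, 2) - 2 min_imb (q - 2) (n div 2) (n - n div 2);
  evaluating the parities modulo 4 gives the closed form.  The bound on n gives n >= 6 q^2,
  which leaves room for all the witnesses.
*)

theory Submission
  imports Defs
begin

lemma bsum_two: "bsum j 2 = 1 + j + (j choose 2)"
  by (simp add: bsum_def numeral_2_eq_2 atMost_Suc)

lemma bsum_one: "bsum j (Suc 0) = 1 + j"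
  by (simp add: bsum_def atMost_Suc)

lemma two_mul_bsum_two: "2 * bsum j 2 = j\<^sup>2 + j + 2"
  using choose_two[of j] by (cases j) (auto simp: bsum_two power2_eq_square algebra_simps)

lemma imb_without_two_lies:
  assumes "b0 \<le> x0" "b1 \<le> x1"
  shows "imb j (x0, x1, 0) (b0, b1, 0) =
    (2 * int b0 - int x0) * int (j choose 2) + (2 * int b1 - int x1) * int j"
  using assms by (simp add: imb_def bsum_two bsum_one of_nat_diff algebra_simps)

lemma legal_initial: "legal (n, 0, 0) a \<longleftrightarrow> (\<exists>a0 \<le> n. a = (a0, 0, 0))"
  by (cases a) auto

lemma imb_initial: "a0 \<le> n \<Longrightarrow> imb j (n, 0, 0) (a0, 0, 0) = (2 * int a0 - int n) * int (j choose 2)"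
  using imb_without_two_lies[of a0 n 0 0 j] by simp

lemma choose_two_odd: "odd m \<Longrightarrow> int (m choose 2) = int m * int (m div 2)"
  by (auto elim!: oddE simp: choose_two algebra_simps)

lemma choose_two_even: "even m \<Longrightarrow> int (m choose 2) = int (m div 2) * (int m - 1)"
  by (auto elim!: evenE simp: choose_two of_nat_diff)

(* The least nonnegative value of u C(m, 2) + v m over u = y0, v = y1 (mod 2); in the game,
   u and v are 2 b0 - y0 and 2 b1 - y1 for a question (b0, b1, 0) on the state (y0, y1, 0). *)
definition min_imb :: "nat \<Rightarrow> nat \<Rightarrow> nat \<Rightarrow> int" where
  "min_imb m y0 y1 =
    (if odd m then int m * int ((y0 * (m div 2) + y1) mod 2) else int (m div 2) * int (y0 mod 2))"

lemma min_imb_nonneg: "0 \<le> min_imb m y0 y1"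
  by (simp add: min_imb_def)

lemma min_imb_le_self: "min_imb m y0 y1 \<le> int m"
proof -
  have "int (m div 2) * int (y0 mod 2) \<le> int m"
    by (cases "even y0") (simp_all add: odd_iff_mod_2_eq_one)
  moreover have "int m * int (k mod 2) \<le> int m" for k
    by (cases "even k") (simp_all add: odd_iff_mod_2_eq_one)
  ultimately show ?thesis
    by (simp add: min_imb_def)
qed

lemma mod_two_le_of_same_parity:
  fixes w :: int
  assumes "0 \<le> w" "even (w - int k)"
  shows "int (k mod 2) \<le> w"
  using assms by (cases "even k") (auto simp: odd_iff_mod_2_eq_one, presburger)

lemma min_imb_le_comb:
  fixes u v :: int
  assumes "0 < m" "even (u + int y0)" "even (v + int y1)"
    and E: "0 \<le> u * int (m choose 2) + v * int m"
  shows "min_imb m y0 y1 \<le> u * int (m choose 2) + v * int m"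
proof (cases "odd m")
  case True
  define h where "h = m div 2"
  define w where "w = u * int h + v"
  have Ew: "u * int (m choose 2) + v * int m = int m * w"
    unfolding w_def h_def choose_two_odd[OF True] by (simp add: algebra_simps)
  have "0 \<le> w"
    using E \<open>0 < m\<close> unfolding Ew by (simp add: zero_le_mult_iff)
  moreover have "w - int (y0 * h + y1) = (u + int y0) * int h + (v + int y1) - 2 * (int y0 * int h + int y1)"
    unfolding w_def by (simp add: algebra_simps)
  then have "even (w - int (y0 * h + y1))"
    using assms(2,3) by (metis dvd_add dvd_diff dvd_mult2 dvd_triv_left)
  ultimately have "int ((y0 * h + y1) mod 2) \<le> w"
    by (rule mod_two_le_of_same_parity)
  then show ?thesis
    using True Ew by (simp add: min_imb_def h_def[symmetric] mult_left_mono)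
next
  case False
  then have "even m"
    by simp
  define h where "h = m div 2"
  define w where "w = u * (int m - 1) + 2 * v"
  have m: "int m = 2 * int h"
    using \<open>even m\<close> unfolding h_def by (metis dvd_mult_div_cancel of_nat_mult of_nat_numeral)
  have Ew: "u * int (m choose 2) + v * int m = int h * w"
    unfolding w_def h_def choose_two_even[OF \<open>even m\<close>] m by (simp add: algebra_simps)
  have "0 < h"
    using \<open>0 < m\<close> m by simp
  then have "0 \<le> w"
    using E unfolding Ew by (simp add: zero_le_mult_iff)
  moreover have "w - int y0 = (u + int y0) * (int m - 1) + 2 * (v - int y0 * int h)"
    unfolding w_def m by (simp add: algebra_simps)
  then have "even (w - int y0)"
    using assms(2) by simp
  ultimately have "int (y0 mod 2) \<le> w"
    by (rule mod_two_le_of_same_parity)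
  then show ?thesis
    using False Ew by (simp add: min_imb_def h_def[symmetric] mult_left_mono)
qed

lemma even_add_mod_two: "even ((z::int) + z mod 2)"
  by presburger

lemma min_imb_as_comb:
  assumes "0 < m"
  obtains u v :: int
  where "even (u + int y0)" "\<bar>u\<bar> \<le> 2" "even (v + int y1)" "\<bar>v\<bar> \<le> int m"
    and "u * int (m choose 2) + v * int m = min_imb m y0 y1"
proof -
  define h where "h = m div 2"
  define r where "r = int y0 mod 2"
  have r: "r = 0 \<or> r = 1" "even (int y0 - r)"
    unfolding r_def by presburger+
  show ?thesis
  proof (cases "odd m")
    case True
    have "m = 2 * h + 1"
      using odd_two_times_div_two_succ[OF True] by (simp add: h_def)
    then have m: "int m = 2 * int h + 1"
      by simp
    define p where "p = (r * int h + int y1) mod 2"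
    have "p = (int y0 * int h + int y1) mod 2"
      unfolding p_def r_def by (metis mod_add_left_eq mod_mult_left_eq)
    then have "min_imb m y0 y1 = int m * p"
      using True by (simp add: min_imb_def h_def of_nat_mod)
    moreover have "\<bar>r * int h + p\<bar> \<le> int m"
      using r(1) m unfolding p_def by auto
    moreover have "even (r * int h + p + int y1)"
      using even_add_mod_two[of "r * int h + int y1"] unfolding p_def by (simp add: algebra_simps)
    moreover have "- r * int (m choose 2) + (r * int h + p) * int m = int m * p"
      using True by (simp add: choose_two_odd h_def[symmetric] algebra_simps)
    ultimately show ?thesis
      using r by (intro that[of "- r" "r * int h + p"]) (auto simp: algebra_simps)
  next
    case False
    have "m = 2 * h"
      using even_two_times_div_two[of m] False by (simp add: h_def)
    then have m: "int m = 2 * int h" "0 < h"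
      using \<open>0 < m\<close> by simp_all
    define s where "s = (int y1 + r * (1 + int h)) mod 2"
    have s: "s = 0 \<or> s = 1"
      unfolding s_def by presburger
    define v where "v = r * (1 - int h) + s * (2 * int h - 1)"
    have "min_imb m y0 y1 = int h * r"
      using False by (simp add: min_imb_def h_def r_def of_nat_mod)
    moreover have "\<bar>v\<bar> \<le> int m"
      using r(1) s m unfolding v_def by auto
    moreover have "v + int y1 = (int y1 + r * (1 + int h)) + s + 2 * (s * int h - r * int h - s)"
      unfolding v_def by (simp add: algebra_simps)
    then have "even (v + int y1)"
      unfolding s_def by (metis dvd_add dvd_triv_left even_add_mod_two)
    moreover have "\<bar>r - 2 * s\<bar> \<le> 2" "even (r - 2 * s + int y0)"
      using r s by auto
    moreover have "(r - 2 * s) * int (m choose 2) + v * int m = int h * r"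
      using False m(1) by (simp add: choose_two_even h_def[symmetric] v_def algebra_simps)
    ultimately show ?thesis
      by (intro that[of "r - 2 * s" v]) simp_all
  qed
qed

lemma min_imb_le_imb:
  assumes "0 < m" "legal (y0, y1, 0) b" "0 \<le> imb m (y0, y1, 0) b"
  shows "min_imb m y0 y1 \<le> imb m (y0, y1, 0) b"
proof -
  obtain b0 b1 where b: "b = (b0, b1, 0)" "b0 \<le> y0" "b1 \<le> y1"
    using assms(2) by (cases b) auto
  then show ?thesis
    using assms min_imb_le_comb[of m "2 * int b0 - int y0" y0 "2 * int b1 - int y1" y1]
    by (simp add: imb_without_two_lies)
qed

lemma min_imb_attained:
  assumes "0 < m" "2 \<le> y0" "2 * L + m \<le> y1"
  obtains b where "legal (y0, y1, 0) b" "imb m (y0, y1, 0) b = min_imb m y0 y1"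
    and "L \<le> snd (snd (Yst (y0, y1, 0) b))" "L \<le> snd (snd (Nst (y0, y1, 0) b))"
proof -
  obtain u v where uv: "even (u + int y0)" "\<bar>u\<bar> \<le> 2" "even (v + int y1)" "\<bar>v\<bar> \<le> int m"
    and E: "u * int (m choose 2) + v * int m = min_imb m y0 y1"
    using min_imb_as_comb[OF assms(1)] by blast
  define b0 where "b0 = nat ((u + int y0) div 2)"
  define b1 where "b1 = nat ((v + int y1) div 2)"
  have b0: "2 * int b0 = u + int y0"
    using uv(1,2) assms(2) unfolding b0_def by simp
  have b1: "2 * int b1 = v + int y1"
    using uv(3,4) assms(3) unfolding b1_def by simp
  have "b0 \<le> y0" "b1 \<le> y1" "L \<le> b1" "L \<le> y1 - b1"
    using b0 b1 uv(2,4) assms(2,3) by linarith+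
  moreover have "imb m (y0, y1, 0) (b0, b1, 0) = min_imb m y0 y1"
    using calculation b0 b1 E by (simp add: imb_without_two_lies)
  ultimately show ?thesis
    by (intro that[of "(b0, b1, 0)"]) simp_all
qed

lemma finite_admissible: "finite {(a, bY, bN). admissible q n a bY bN}"
proof -
  let ?B = "{..n} \<times> {..n} \<times> {..n}"
  have "{(a, bY, bN). admissible q n a bY bN} \<subseteq> ?B \<times> ?B \<times> ?B"
    by (auto simp: admissible_def legal_initial)
  then show ?thesis
    by (rule finite_subset) simp
qed

lemma Delta_eqI:
  assumes "\<And>a bY bN. admissible q n a bY bN \<Longrightarrow> qval q n a bY bN \<le> V"
    and "admissible q n a bY bN" "qval q n a bY bN = V"
  shows "Delta q n = V"
proof -
  define S where "S = {qval q n a bY bN | a bY bN. admissible q n a bY bN}"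
  have "S = (\<lambda>(a, bY, bN). qval q n a bY bN) ` {(a, bY, bN). admissible q n a bY bN}"
    unfolding S_def by force
  then have "finite S"
    using finite_admissible by simp
  moreover have "\<And>x. x \<in> S \<Longrightarrow> x \<le> V"
    using assms(1) unfolding S_def by blast
  moreover have "V \<in> S"
    using assms(2,3) unfolding S_def by blast
  ultimately show ?thesis
    unfolding Delta_def S_def[symmetric] by (rule Max_eqI)
qed

definition opt_qval :: "nat \<Rightarrow> nat \<Rightarrow> int" where
  "opt_qval q n =
    - int (n mod 2) * int ((q - 1) choose 2) - 2 * min_imb (q - 2) (n div 2) (n - n div 2)"

lemma double_le_choose_two_pred:
  assumes "5 \<le> q"
  shows "2 * (q - 2) \<le> (q - 1) choose 2"
proof -
  have "2 * (q - 2) = 4 * (q - 2) div 2"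
    by simp
  also have "\<dots> \<le> (q - 1) * (q - 2) div 2"
    using assms by (intro div_le_mono mult_right_mono) simp_all
  also have "\<dots> = (q - 1) choose 2"
    using choose_two[of "q - 1"] by (simp add: numeral_2_eq_2)
  finally show ?thesis .
qed

lemma qval_le_opt_qval:
  assumes "5 \<le> q" "admissible q n a bY bN"
  shows "qval q n a bY bN \<le> opt_qval q n"
proof -
  define D where "D = int ((q - 1) choose 2)"
  define k where "k = n div 2"
  obtain a0 where a: "a = (a0, 0, 0)" "a0 \<le> n"
    using assms(2) by (auto simp: admissible_def legal_initial)
  define d where "d = imb (q - 1) (n, 0, 0) a"
  define dN where "dN = imb (q - 2) (n - a0, a0, 0) bN"
  have d: "d = (2 * int a0 - int n) * D"
    unfolding d_def D_def a using imb_initial[OF a(2)] by simp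
  have adm: "0 \<le> d" "0 \<le> dN" "legal (n - a0, a0, 0) bN"
    using assms(2) unfolding admissible_def d_def dN_def a by simp_all
  have "qval q n a bY bN \<le> - d - 2 * dN"
    unfolding qval_def d_def dN_def a by (simp add: Let_def min_le_iff_disj)
  have "2 * int (q - 2) \<le> D"
    using double_le_choose_two_pred[OF assms(1)] unfolding D_def by linarith
  then have "0 < D"
    using assms(1) by simp
  then have "n - k \<le> a0"
    using adm(1) unfolding d k_def by (simp add: zero_le_mult_iff)
  then consider "a0 = n - k" | "n - k < a0"
    by linarith
  then show ?thesis
  proof cases
    case 1
    have "d = int (n mod 2) * D"
      unfolding d 1 k_def by (simp add: of_nat_diff) presburger
    moreover have "min_imb (q - 2) k (n - k) \<le> dN"
      using min_imb_le_imb[of "q - 2" k "n - k" bN] adm assms(1)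
      unfolding dN_def 1 by (simp add: k_def)
    ultimately show ?thesis
      using \<open>qval q n a bY bN \<le> - d - 2 * dN\<close> unfolding opt_qval_def D_def k_def by simp
  next
    case 2
    have "2 \<le> 2 * int a0 - int n"
      using 2 unfolding k_def by linarith
    then have "2 * D \<le> d"
      unfolding d using \<open>0 < D\<close> by (simp add: mult_right_mono)
    moreover have "int (n mod 2) * D \<le> D"
      using \<open>0 < D\<close> by (cases "even n") (simp_all add: odd_iff_mod_2_eq_one)
    then have "- D - 2 * int (q - 2) \<le> opt_qval q n"
      using min_imb_le_self[of "q - 2" k "n - k"]
      unfolding opt_qval_def D_def[symmetric] k_def[symmetric] by linarith
    ultimately show ?thesis
      using \<open>qval q n a bY bN \<le> - d - 2 * dN\<close> \<open>2 * int (q - 2) \<le> D\<close> adm(2) by linarith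
  qed
qed

lemma opt_qval_attained:
  assumes "5 \<le> q" "4 * L + 2 * q \<le> n"
  obtains a bY bN where "admissible q n a bY bN" "qval q n a bY bN = opt_qval q n"
    and "\<forall>s \<in> {Yst (Yst (n, 0, 0) a) bY, Nst (Yst (n, 0, 0) a) bY,
               Yst (Nst (n, 0, 0) a) bN, Nst (Nst (n, 0, 0) a) bN}. L \<le> snd (snd s)"
proof -
  define m where "m = q - 2"
  define k where "k = n div 2"
  define D where "D = int ((q - 1) choose 2)"
  have mk: "0 < m" "2 \<le> k" "2 * L + m \<le> k" "k \<le> n - k"
    using assms unfolding m_def k_def by linarith+
  obtain bY where bY: "legal (n - k, k, 0) bY" "imb m (n - k, k, 0) bY = min_imb m (n - k) k"
    "L \<le> snd (snd (Yst (n - k, k, 0) bY))" "L \<le> snd (snd (Nst (n - k, k, 0) bY))"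
    using min_imb_attained[of m "n - k" L k] mk by auto
  obtain bN where bN: "legal (k, n - k, 0) bN" "imb m (k, n - k, 0) bN = min_imb m k (n - k)"
    "L \<le> snd (snd (Yst (k, n - k, 0) bN))" "L \<le> snd (snd (Nst (k, n - k, 0) bN))"
    using min_imb_attained[of m k L "n - k"] mk by auto
  define a :: lstate where "a = (n - k, 0, 0)"
  have YN: "Yst (n, 0, 0) a = (n - k, k, 0)" "Nst (n, 0, 0) a = (k, n - k, 0)"
    unfolding a_def k_def by simp_all
  have d: "imb (q - 1) (n, 0, 0) a = int (n mod 2) * D"
    unfolding a_def D_def k_def imb_initial[OF diff_le_self] by (simp add: of_nat_diff) presburger
  have "2 * int m \<le> D"
    using double_le_choose_two_pred[OF assms(1)] unfolding D_def m_def by linarith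
  moreover have "0 \<le> min_imb m k (n - k)" "min_imb m (n - k) k \<le> int m"
    by (rule min_imb_nonneg min_imb_le_self)+
  moreover have "n - k = k" if "even n"
    using that unfolding k_def by auto
  ultimately have gap: "min_imb m (n - k) k - min_imb m k (n - k) \<le> int (n mod 2) * D"
    by (cases "even n") (auto simp: odd_iff_mod_2_eq_one)
  have min_eq: "min (min (d + 2 * y) (d - 2 * y)) (min (- d + 2 * z) (- d - 2 * z)) = - d - 2 * z"
    if "0 \<le> y" "0 \<le> z" "y - z \<le> d" for d y z :: int
    using that by linarith
  have "qval q n a bY bN = - (int (n mod 2) * D) - 2 * min_imb m k (n - k)"
    unfolding qval_def YN d m_def[symmetric] bY(2) bN(2) Let_def
    by (rule min_eq[OF min_imb_nonneg min_imb_nonneg gap])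
  also have "\<dots> = opt_qval q n"
    unfolding opt_qval_def D_def m_def k_def by simp
  finally have qv: "qval q n a bY bN = opt_qval q n" .
  have adm: "admissible q n a bY bN"
    unfolding admissible_def YN d m_def[symmetric] bY(2) bN(2)
    using bY(1) bN(1) min_imb_nonneg \<open>2 * int m \<le> D\<close> by (simp add: a_def)
  have "\<forall>s \<in> {Yst (Yst (n, 0, 0) a) bY, Nst (Yst (n, 0, 0) a) bY,
               Yst (Nst (n, 0, 0) a) bN, Nst (Nst (n, 0, 0) a) bN}. L \<le> snd (snd s)"
    unfolding YN using bY(3,4) bN(3,4) by simp
  then show ?thesis
    by (rule that[OF adm qv])
qed

lemma cube_mod_four: "(z::int) ^ 3 mod 4 = (if even z then 0 else z mod 4)"
proof (cases "even z")
  case True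
  then obtain t where "z = 2 * t"
    by blast
  then have "z ^ 3 = 4 * (2 * t ^ 3)"
    by (simp add: power3_eq_cube)
  then show ?thesis
    using True by simp
next
  case False
  then obtain t where "z = 2 * t + 1"
    by (blast elim: oddE)
  then have "z ^ 3 = z + 4 * (t * (2 * t + 1) * (t + 1))"
    by (simp add: power3_eq_cube algebra_simps)
  then show ?thesis
    using False by simp
qed

lemma twice_min_imb_halves:
  "2 * min_imb (q - 2) (n div 2) (n - n div 2) =
     (if n mod 4 = 0 then 0
      else if n mod 4 = 1 then 2 * (int q mod 2)
      else if n mod 4 = 2 then (1 - int q ^ 3) mod 4
      else (1 + int q ^ 3) mod 4) * int (q - 2)"
proof (cases "q < 2")
  case True
  then show ?thesis
    by (simp add: min_imb_def)
next
  case False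
  define m where "m = q - 2"
  define k where "k = n div 2"
  have minus_cube: "(1 - int q ^ 3) mod 4 = (if even q then 1 else (1 - int (q mod 4)) mod 4)"
    using cube_mod_four[of "int q"] mod_diff_right_eq[of 1 "int q ^ 3" 4, symmetric]
    by (auto simp: of_nat_mod)
  have plus_cube: "(1 + int q ^ 3) mod 4 = (if even q then 1 else (1 + int (q mod 4)) mod 4)"
    using cube_mod_four[of "int q"] mod_add_right_eq[of 1 "int q ^ 3" 4, symmetric]
    by (auto simp: of_nat_mod)
  have q2: "int q mod 2 = int (q mod 2)"
    by (simp add: of_nat_mod)
  have Q0: "q mod 4 = 0 \<Longrightarrow> even q \<and> even m \<and> 2 * (m div 2) = m"
    and Q1: "q mod 4 = 1 \<Longrightarrow> odd q \<and> odd m \<and> odd (m div 2)"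
    and Q2: "q mod 4 = 2 \<Longrightarrow> even q \<and> even m \<and> 2 * (m div 2) = m"
    and Q3: "q mod 4 = 3 \<Longrightarrow> odd q \<and> odd m \<and> even (m div 2)"
    using False unfolding m_def by presburger+
  have N0: "n mod 4 = 0 \<Longrightarrow> even k \<and> n - k = k"
    and N1: "n mod 4 = 1 \<Longrightarrow> even k \<and> n - k = k + 1"
    and N2: "n mod 4 = 2 \<Longrightarrow> odd k \<and> n - k = k"
    and N3: "n mod 4 = 3 \<Longrightarrow> odd k \<and> n - k = k + 1"
    unfolding k_def by presburger+
  have "q mod 4 = 0 \<or> q mod 4 = 1 \<or> q mod 4 = 2 \<or> q mod 4 = 3"
    and "n mod 4 = 0 \<or> n mod 4 = 1 \<or> n mod 4 = 2 \<or> n mod 4 = 3"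
    by auto
  then show ?thesis
    unfolding minus_cube plus_cube q2 m_def[symmetric] k_def[symmetric]
    using Q0 Q1 Q2 Q3 N0 N1 N2 N3
    by (elim disjE) (simp_all add: min_imb_def mod2_eq_if)
qed

lemma opt_qval_closed_form:
  "opt_qval q n =
     - int (n mod 2) * int ((q - 1) choose 2)
     - (if n mod 4 = 0 then 0
        else if n mod 4 = 1 then 2 * (int q mod 2)
        else if n mod 4 = 2 then (1 - int q ^ 3) mod 4
        else (1 + int q ^ 3) mod 4) * int ((q - 2) choose 1)"
  unfolding opt_qval_def twice_min_imb_halves by simp

lemma fourth_power_le_two_power: "19 \<le> q \<Longrightarrow> 18 * q ^ 4 \<le> 5 * (2::nat) ^ q"
proof (induction q rule: dec_induct)
  case base
  then show ?case
    by simp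
next
  case (step q)
  have "q ^ 2 \<ge> 19 * q" "q ^ 3 \<ge> 19 * q ^ 2" "q ^ 4 \<ge> 19 * q ^ 3"
    using step(1) by (simp_all add: power_numeral_reduce mult_right_mono)
  moreover have "(Suc q) ^ 4 = q ^ 4 + 4 * q ^ 3 + 6 * q ^ 2 + 4 * q + 1"
    by (simp add: power_numeral_reduce algebra_simps)
  ultimately have "(Suc q) ^ 4 \<le> 2 * q ^ 4"
    using step(1) by linarith
  then show ?case
    using step(3) by simp
qed

lemma six_square_le_initial_size:
  assumes "19 \<le> q" "2 ^ q / real (bsum q 2) \<le> real n"
  shows "6 * q\<^sup>2 \<le> n"
proof -
  have "0 < bsum q 2"
    by (simp add: bsum_two)
  then have "real (2 ^ q) \<le> real (n * bsum q 2)"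
    using assms(2) by (simp add: divide_le_eq)
  then have "2 ^ q \<le> n * bsum q 2"
    by (simp only: of_nat_le_iff)
  have "19 * q \<le> q\<^sup>2"
    using assms(1) by (simp add: power2_eq_square mult_right_mono)
  then have "5 * bsum q 2 \<le> 3 * q\<^sup>2"
    using two_mul_bsum_two[of q] assms(1) by linarith
  have "(6 * q\<^sup>2) * (3 * q\<^sup>2) = 18 * q ^ 4"
    by (simp add: power_numeral_reduce)
  also have "\<dots> \<le> 5 * 2 ^ q"
    by (rule fourth_power_le_two_power[OF assms(1)])
  also have "\<dots> \<le> n * (5 * bsum q 2)"
    using \<open>2 ^ q \<le> n * bsum q 2\<close> by simp
  also have "\<dots> \<le> n * (3 * q\<^sup>2)"
    using \<open>5 * bsum q 2 \<le> 3 * q\<^sup>2\<close> by simp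
  finally show ?thesis
    using assms(1) by (subst (asm) mult_le_cancel2) simp
qed

theorem lemma15:
  fixes q n :: nat
  assumes "q \<ge> 19"
    and "real n \<ge> 2 ^ q / real (bsum q 2)"
  shows "Delta q n =
           - int (n mod 2) * int ((q - 1) choose 2)
           - (if n mod 4 = 0 then 0
              else if n mod 4 = 1 then 2 * (int q mod 2)
              else if n mod 4 = 2 then (1 - int q ^ 3) mod 4
              else (1 + int q ^ 3) mod 4) * int ((q - 2) choose 1)
       \<and> (\<exists>a bY bN. admissible q n a bY bN \<and> qval q n a bY bN = Delta q n \<and>
            (\<forall>s \<in> {Yst (Yst (n, 0, 0) a) bY, Nst (Yst (n, 0, 0) a) bY,
                    Yst (Nst (n, 0, 0) a) bN, Nst (Nst (n, 0, 0) a) bN}.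
               snd (snd s) \<ge> (q - 2) ^ 2 + bsum (q - 2) 2))"
proof -
  define m where "m = q - 2"
  define L where "L = m\<^sup>2 + bsum m 2"
  have "5 \<le> q" and q: "q = m + 2"
    using assms(1) unfolding m_def by simp_all
  have "6 * q\<^sup>2 \<le> n"
    using six_square_le_initial_size[OF assms] .
  moreover have "2 * L = 3 * m\<^sup>2 + m + 2"
    using two_mul_bsum_two[of m] unfolding L_def by simp
  moreover have "q\<^sup>2 = m\<^sup>2 + 4 * m + 4"
    unfolding q by (simp add: power2_eq_square algebra_simps)
  ultimately have "4 * L + 2 * q \<le> n"
    using q by linarith
  then obtain a bY bN where adm: "admissible q n a bY bN" and opt: "qval q n a bY bN = opt_qval q n"
    and far: "\<forall>s \<in> {Yst (Yst (n, 0, 0) a) bY, Nst (Yst (n, 0, 0) a) bY,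
               Yst (Nst (n, 0, 0) a) bN, Nst (Nst (n, 0, 0) a) bN}. L \<le> snd (snd s)"
    using opt_qval_attained[OF \<open>5 \<le> q\<close>] by blast
  have Delta: "Delta q n = opt_qval q n"
    using qval_le_opt_qval[OF \<open>5 \<le> q\<close>] adm opt by (rule Delta_eqI)
  moreover have "qval q n a bY bN = Delta q n"
    using opt Delta by simp
  ultimately show ?thesis
    using adm far unfolding opt_qval_closed_form L_def m_def by blast
qed

end
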